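(* Let $G$ be a distribution on $\mathbb{R}$ with Lebesgue density $g$, and let $\theta^g=T^*_{(\alpha,\lambda)}(G)$ be the best fitting parameter. Then the influence function of the minimum $S^*$-divergence functional $T^*_{(\alpha,\lambda)}$ at $G$ is $$IF(y;G,T^*_{(\alpha,\lambda)})=[J_g^*]^{-1}N_g^*(y),$$ where $$N_g^*(y)=A\left[\int (f^*_{\theta^g}(x))^B (g^*(x))^{A-1}\tilde u_{\theta^g}(x)W(x,y,h)\,dx-\int (f^*_{\theta^g})^B (g^* )^A\tilde u_{\theta^g}\right],$$ $$J_g^*=A\int (f^*_{\theta^g})^{1+\alpha}\tilde u_{\theta^g}\tilde u_{\theta^g}^T+\int\big(\tilde i_{\theta^g}-B\,\tilde u_{\theta^g}\tilde u_{\theta^g}^T\big)\big[(g^* )^A-(f^*_{\theta^g})^A\big](f^*_{\theta^g})^B .$$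
   Context: Let $\{F_\theta:\theta\in\Theta\subseteq\mathbb{R}^p\}$ be a parametric family of distributions on $\mathbb{R}$ with Lebesgue densities $f_\theta$. Fix $\alpha\ge 0$, $\lambda\in\mathbb{R}$ and put $A=1+\lambda(1-\alpha)$, $B=\alpha-\lambda(1-\alpha)$ (so $A+B=1+\alpha$). For densities $g,f$ the $S$-divergence is $S_{(\alpha,\lambda)}(g,f)=\frac1A\int f^{1+\alpha}-\frac{1+\alpha}{AB}\int f^Bg^A+\frac1B\int g^{1+\alpha}$ (defined by continuous limits when $A=0$ or $B=0$). Let $W(x,y,h)\ge0$ be a kernel with fixed bandwidth $h>0$ which, for each $y$, is a probability density in $x$. Define the smoothed densities $f^*_\theta(x)=\int W(x,y,h)f_\theta(y)\,dy$ and $g^*(x)=\int W(x,y,h)\,dG(y)$, the smoothed score $\tilde u_\theta(x)=\nabla_\theta\log f^*_\theta(x)$ and $\tilde i_\theta(x)=-\nabla_\theta\tilde u_\theta(x)$. The minimum $S^*$-divergence functional $T^*_{(\alpha,\lambda)}(G)$ is defined by $S_{(\alpha,\lambda)}(g^*,f^*_{T^*_{(\alpha,\lambda)}(G)})=\min_{\theta\in\Theta}S_{(\alpha,\lambda)}(g^*,f^*_\theta)$ and satisfies the estimating equation $\int K(\delta(x))(f^*_\theta(x))^{1+\alpha}\tilde u_\theta(x)\,dx=0$ with $\delta=g^*/f^*_\theta-1$ and $K(\delta)=((\delta+1)^A-1)/A$ ($K(\delta)=\log(1+\delta)$ if $A=0$). The influence function of a functional $T$ at $G$ is $IF(y;G,T)=\frac{\partial}{\partial\epsilon}T(G_\epsilon)\big|_{\epsilon=0}$,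 where $G_\epsilon=(1-\epsilon)G+\epsilon\wedge_y$ and $\wedge_y$ is the point mass at $y$. *)

theory Defs
  imports "HOL-Probability.Probability"
begin

definition contam :: "real measure \<Rightarrow> real \<Rightarrow> real \<Rightarrow> real measure" where
  "contam G y \<epsilon> = measure_of UNIV (sets borel)
      (\<lambda>S. ennreal (1 - \<epsilon>) * emeasure G S + ennreal \<epsilon> * indicator S y)"

definition fstar :: "(real \<Rightarrow> real \<Rightarrow> real \<Rightarrow> real) \<Rightarrow> real \<Rightarrow> ('p \<Rightarrow> real \<Rightarrow> real)
                     \<Rightarrow> 'p \<Rightarrow> real \<Rightarrow> real" where
  "fstar W h f \<theta> x = (LINT y|lborel. W x y h * f \<theta> y)"

definition gstar :: "(real \<Rightarrow> real \<Rightarrow> real \<Rightarrow> real) \<Rightarrow> real \<Rightarrow> real measure \<Rightarrow> real \<Rightarrow> real" where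
  "gstar W h G x = (LINT y|G. W x y h)"

definition Kfun :: "real \<Rightarrow> real \<Rightarrow> real" where
  "Kfun A \<delta> = (if A = 0 then ln (1 + \<delta>) else ((\<delta> + 1) powr A - 1) / A)"

definition sinfo :: "(real^'p \<Rightarrow> real \<Rightarrow> real^'p) \<Rightarrow> real^'p \<Rightarrow> real \<Rightarrow> real^'p^'p" where
  "sinfo u \<theta> x = - jacobian (\<lambda>t. u t x) (at \<theta>)"

definition outer :: "real^'p \<Rightarrow> real^'p \<Rightarrow> real^'p^'p" where
  "outer a b = (\<chi> i j. a $ i * b $ j)"

definition est_integrand ::
  "real \<Rightarrow> real \<Rightarrow> (real \<Rightarrow> real \<Rightarrow> real \<Rightarrow> real) \<Rightarrow> real \<Rightarrow> (real^'p \<Rightarrow> real \<Rightarrow> real)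
   \<Rightarrow> (real^'p \<Rightarrow> real \<Rightarrow> real^'p) \<Rightarrow> real measure \<Rightarrow> real^'p \<Rightarrow> real \<Rightarrow> real^'p" where
  "est_integrand \<alpha> lam W h f u M \<theta> x =
     (Kfun (1 + lam * (1 - \<alpha>)) (gstar W h M x / fstar W h f \<theta> x - 1)
        * fstar W h f \<theta> x powr (1 + \<alpha>)) *\<^sub>R u \<theta> x"

definition est_fun ::
  "real \<Rightarrow> real \<Rightarrow> (real \<Rightarrow> real \<Rightarrow> real \<Rightarrow> real) \<Rightarrow> real \<Rightarrow> (real^'p \<Rightarrow> real \<Rightarrow> real)
   \<Rightarrow> (real^'p \<Rightarrow> real \<Rightarrow> real^'p) \<Rightarrow> real measure \<Rightarrow> real^'p \<Rightarrow> real^'p" where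
  "est_fun \<alpha> lam W h f u M \<theta> = (LINT x|lborel. est_integrand \<alpha> lam W h f u M \<theta> x)"

text \<open>Influence function IF(y;G,T) = d/d eps T(G_eps) at eps = 0
  (G_eps is a distribution only for eps in [0,1], so this is the right derivative).\<close>
definition influence_function :: "(real measure \<Rightarrow> 'b::real_normed_vector) \<Rightarrow> real measure \<Rightarrow> real \<Rightarrow> 'b" where
  "influence_function T G y = vector_derivative (\<lambda>\<epsilon>. T (contam G y \<epsilon>)) (at 0 within {0..1})"

end

theory Submission
  imports Defs
begin

text \<open>The estimating equation \<open>\<Psi>(\<epsilon>, T(G\<^sub>\<epsilon>)) = 0\<close> holds for all \<open>\<epsilon> \<in> [0,1]\<close>, so
  differentiating at \<open>\<epsilon> = 0\<close> gives \<open>\<partial>\<^sub>\<epsilon>\<Psi> + \<partial>\<^sub>\<theta>\<Psi> IF = 0\<close>. Smoothing makes the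
  contamination linear in the smoothed data density, \<open>g*\<^sub>\<epsilon> = (1 - \<epsilon>) g* + \<epsilon> W(\<cdot>, y, h)\<close>,
  and for \<open>A \<noteq> 0\<close> the integrand is \<open>((g*)\<^sup>A - (f*\<^sub>\<theta>)\<^sup>A) (f*\<^sub>\<theta>)\<^sup>B u\<^sub>\<theta> / A\<close>. Its
  \<open>\<epsilon>\<close>-derivative is the integrand of \<open>N*\<^sub>g / A\<close> and its \<open>\<theta>\<close>-derivative is \<open>-1/A\<close> times
  the integrand of \<open>J*\<^sub>g\<close>, hence \<open>J*\<^sub>g IF = N*\<^sub>g\<close>. The case \<open>A = 0\<close> cannot occur,
  since then \<open>J*\<^sub>g = 0\<close> is not invertible.\<close>

lemma contam_sets [simp]: "sets (contam G y e) = sets borel"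
  unfolding contam_def using sets.sigma_sets_eq[of borel] by simp

lemma contam_space [simp]: "space (contam G y e) = UNIV"
  unfolding contam_def by (simp add: space_measure_of_conv)

lemma emeasure_contam:
  assumes G: "sets G = sets borel" and S: "S \<in> sets borel"
  shows "emeasure (contam G y e) S = ennreal (1 - e) * emeasure G S + ennreal e * indicator S y"
  unfolding contam_def
proof (rule emeasure_measure_of_sigma)
  show "sigma_algebra UNIV (sets borel)"
    using sets.sigma_algebra_axioms[of borel] by simp
  show "positive (sets borel) (\<lambda>S. ennreal (1 - e) * emeasure G S + ennreal e * indicator S y)"
    by (simp add: positive_def)
  show "countably_additive (sets borel) (\<lambda>S. ennreal (1 - e) * emeasure G S + ennreal e * indicator S y)"
    unfolding countably_additive_def
  proof (intro allI impI)
    fix A :: "nat \<Rightarrow> real set"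
    assume A: "range A \<subseteq> sets borel" "disjoint_family A" "\<Union> (range A) \<in> sets borel"
    have "(\<Sum>i. ennreal (1 - e) * emeasure G (A i) + ennreal e * indicator (A i) y)
        = (\<Sum>i. ennreal (1 - e) * emeasure G (A i)) + (\<Sum>i. ennreal e * indicator (A i) y)"
      by (subst suminf_add) auto
    also have "\<dots> = ennreal (1 - e) * (\<Sum>i. emeasure G (A i)) + ennreal e * (\<Sum>i. indicator (A i) y)"
      by (simp add: ennreal_suminf_cmult)
    also have "\<dots> = ennreal (1 - e) * emeasure G (\<Union> (range A)) + ennreal e * indicator (\<Union> (range A)) y"
      using A G by (simp add: suminf_emeasure suminf_indicator)
    finally show "(\<Sum>i. ennreal (1 - e) * emeasure G (A i) + ennreal e * indicator (A i) y) =
        ennreal (1 - e) * emeasure G (\<Union> (range A)) + ennreal e * indicator (\<Union> (range A)) y" .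
  qed
qed (fact S)

lemma nn_integral_contam:
  assumes G: "sets G = sets borel" and f: "f \<in> borel_measurable borel"
  shows "(\<integral>\<^sup>+x. f x \<partial>contam G y e) = ennreal (1 - e) * (\<integral>\<^sup>+x. f x \<partial>G) + ennreal e * f y"
  using f
proof (induction rule: borel_measurable_induct)
  case (cong f g)
  have "(\<integral>\<^sup>+x. f x \<partial>contam G y e) = (\<integral>\<^sup>+x. g x \<partial>contam G y e)"
    by (rule nn_integral_cong) (use cong in simp)
  moreover have "(\<integral>\<^sup>+x. f x \<partial>G) = (\<integral>\<^sup>+x. g x \<partial>G)"
    by (rule nn_integral_cong) (use cong sets_eq_imp_space_eq[OF G] in simp)
  ultimately show ?case using cong by simp
next
  case (set S)
  then show ?case using emeasure_contam[OF G set] G by simp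
next
  case (mult v c)
  then have "v \<in> borel_measurable (contam G y e)" "v \<in> borel_measurable G"
    using G by (auto simp: measurable_def)
  with mult show ?case
    by (simp add: nn_integral_cmult algebra_simps mult.left_commute)
next
  case (add v w)
  then have "v \<in> borel_measurable (contam G y e)" "v \<in> borel_measurable G"
    "w \<in> borel_measurable (contam G y e)" "w \<in> borel_measurable G"
    using G by (auto simp: measurable_def)
  with add show ?case
    by (simp add: nn_integral_add algebra_simps)
next
  case (seq U)
  have meas: "\<And>i. U i \<in> borel_measurable (contam G y e)" "\<And>i. U i \<in> borel_measurable G"
    using seq G by (auto simp: measurable_def)
  have inc: "incseq (\<lambda>i. ennreal (1 - e) * (\<integral>\<^sup>+x. U i x \<partial>G))" "incseq (\<lambda>i. ennreal e * U i y)"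
    using seq unfolding incseq_def le_fun_def by (auto intro!: mult_left_mono nn_integral_mono)
  have "(\<integral>\<^sup>+x. (SUP i. U i x) \<partial>contam G y e) = (SUP i. (\<integral>\<^sup>+x. U i x \<partial>contam G y e))"
    using seq meas by (intro nn_integral_monotone_convergence_SUP) auto
  also have "\<dots> = (SUP i. ennreal (1 - e) * (\<integral>\<^sup>+x. U i x \<partial>G)) + (SUP i. ennreal e * U i y)"
    using seq ennreal_SUP_add[OF inc] by simp
  also have "\<dots> = ennreal (1 - e) * (\<integral>\<^sup>+x. (SUP i. U i x) \<partial>G) + ennreal e * (SUP i. U i y)"
    using seq meas by (simp add: SUP_mult_left_ennreal nn_integral_monotone_convergence_SUP)
  finally show ?case by (simp add: image_comp)
qed

lemma integral_contam:
  fixes k :: "real \<Rightarrow> real"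
  assumes G: "sets G = sets borel" and k: "k \<in> borel_measurable borel" "\<And>z. 0 \<le> k z"
    and int: "integrable G k" and e: "0 \<le> e" "e \<le> 1"
  shows "(LINT z|contam G y e. k z) = (1 - e) * (LINT z|G. k z) + e * k y"
proof -
  have nonneg: "0 \<le> (1 - e) * (LINT z|G. k z) + e * k y"
    using e k by (simp add: integral_nonneg)
  have "(\<integral>\<^sup>+z. ennreal (k z) \<partial>G) = ennreal (LINT z|G. k z)"
    using int k by (intro nn_integral_eq_integral) auto
  then have "(\<integral>\<^sup>+z. ennreal (k z) \<partial>contam G y e) = ennreal ((1 - e) * (LINT z|G. k z) + e * k y)"
    using nn_integral_contam[OF G, of "\<lambda>z. ennreal (k z)" y e] e k
    by (simp add: ennreal_mult integral_nonneg ennreal_plus[symmetric])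
  moreover have "k \<in> borel_measurable (contam G y e)"
    using k by (simp add: measurable_def)
  ultimately show ?thesis
    using nn_integral_eq_integrable[of k "contam G y e" "(1 - e) * (LINT z|G. k z) + e * k y"] nonneg k
    by simp
qed

lemma contam_0:
  assumes "sets G = sets borel"
  shows "contam G y 0 = G"
proof -
  have "(\<lambda>S. ennreal (1 - 0) * emeasure G S + ennreal 0 * indicator S y) = emeasure G"
    by (simp add: fun_eq_iff)
  then show ?thesis
    unfolding contam_def using measure_of_of_measure[of G] sets_eq_imp_space_eq[OF assms] assms
    by simp
qed

lemma gstar_contam:
  assumes "sets G = sets borel" and "(\<lambda>z. W x z h) \<in> borel_measurable borel"
    and "\<forall>z. 0 \<le> W x z h" and "integrable G (\<lambda>z. W x z h)" and "e \<in> {0..1}"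
  shows "gstar W h (contam G y e) x = (1 - e) * gstar W h G x + e * W x y h"
  using integral_contam[of G "\<lambda>z. W x z h"] assms unfolding gstar_def by auto

lemma has_derivative_unique_within_interval:
  fixes f :: "real \<Rightarrow> 'b::real_normed_vector"
  assumes "a < b" "x \<in> {a..b}"
    and "(f has_derivative f') (at x within {a..b})" "(f has_derivative f'') (at x within {a..b})"
  shows "f' = f''"
  using frechet_derivative_unique_within_closed_interval[of a b x f f' f''] assms
  by (simp add: cbox_interval)

lemma has_derivative_pair_split:
  fixes F :: "real \<times> 'a::real_normed_vector \<Rightarrow> 'b::real_normed_vector"
  assumes F: "(F has_derivative D) (at (x, \<theta>) within {a..b} \<times> \<Theta>)"
    and "a < b" "x \<in> {a..b}" "\<theta> \<in> \<Theta>" "open \<Theta>"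
    and Fx: "((\<lambda>e. F (e, \<theta>)) has_derivative (\<lambda>t. t *\<^sub>R d)) (at x within {a..b})"
    and F\<theta>: "((\<lambda>t. F (x, t)) has_derivative D\<theta>) (at \<theta>)"
  shows "D (s, w) = s *\<^sub>R d + D\<theta> w"
proof -
  have "((\<lambda>e. (e, \<theta>)) has_derivative (\<lambda>t. (t, 0))) (at x within {a..b})"
    by (auto intro!: derivative_eq_intros)
  from has_derivative_in_compose[OF this has_derivative_subset[OF F]]
  have "((\<lambda>e. F (e, \<theta>)) has_derivative (\<lambda>t. D (t, 0))) (at x within {a..b})"
    using \<open>\<theta> \<in> \<Theta>\<close> by auto
  then have Dx: "(\<lambda>t. D (t, 0)) = (\<lambda>t. t *\<^sub>R d)"
    using has_derivative_unique_within_interval[OF \<open>a < b\<close> \<open>x \<in> {a..b}\<close> _ Fx] by blast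
  have "((\<lambda>t. (x, t)) has_derivative (\<lambda>w. (0, w))) (at \<theta> within \<Theta>)"
    by (auto intro!: derivative_eq_intros)
  from has_derivative_in_compose[OF this has_derivative_subset[OF F]]
  have "((\<lambda>t. F (x, t)) has_derivative (\<lambda>w. D (0, w))) (at \<theta>)"
    using \<open>x \<in> {a..b}\<close> at_within_open[OF \<open>\<theta> \<in> \<Theta>\<close> \<open>open \<Theta>\<close>] by (auto simp: image_subset_iff)
  then have D\<theta>_eq: "(\<lambda>w. D (0, w)) = D\<theta>"
    using has_derivative_unique[OF _ F\<theta>] by blast
  have "D (s, w) = D (s, 0) + D (0, w)"
    using linear_add[OF has_derivative_linear[OF F], of "(s, 0)" "(0, w)"] by simp
  then show ?thesis
    using fun_cong[OF Dx, of s] fun_cong[OF D\<theta>_eq, of w] by simp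
qed

lemma has_derivative_implicit_zero:
  fixes \<Psi> :: "real \<times> 'a::real_normed_vector \<Rightarrow> 'b::real_normed_vector"
  assumes \<Psi>: "(\<Psi> has_derivative D) (at (x, T x) within {a..b} \<times> \<Theta>)"
    and "a < b" "x \<in> {a..b}"
    and T: "\<forall>e\<in>{a..b}. T e \<in> \<Theta> \<and> \<Psi> (e, T e) = 0"
    and T': "(T has_vector_derivative v) (at x within {a..b})"
  shows "D (1, v) = 0"
proof -
  have "((\<lambda>e. (e, T e)) has_derivative (\<lambda>t. (t, t *\<^sub>R v))) (at x within {a..b})"
    using T' unfolding has_vector_derivative_def by (intro has_derivative_Pair has_derivative_ident)
  from has_derivative_in_compose[OF this has_derivative_subset[OF \<Psi>]]
  have "((\<lambda>e. \<Psi> (e, T e)) has_derivative (\<lambda>t. D (t, t *\<^sub>R v))) (at x within {a..b})"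
    using T by auto
  moreover have "((\<lambda>e. \<Psi> (e, T e)) has_derivative (\<lambda>t. 0)) (at x within {a..b})"
    by (rule has_derivative_transform_within[OF has_derivative_const zero_less_one \<open>x \<in> {a..b}\<close>])
      (use T in auto)
  ultimately have "(\<lambda>t. D (t, t *\<^sub>R v)) = (\<lambda>t. 0)"
    using has_derivative_unique_within_interval[OF \<open>a < b\<close> \<open>x \<in> {a..b}\<close>] by blast
  from fun_cong[OF this, of 1] show ?thesis by simp
qed

lemma has_derivative_of_ln:
  fixes F :: "'a::real_normed_vector \<Rightarrow> real"
  assumes d: "((\<lambda>t. ln (F t)) has_derivative D) (at t0)"
    and pos: "\<forall>t\<in>S. 0 < F t" and S: "open S" "t0 \<in> S"
  shows "(F has_derivative (\<lambda>v. F t0 * D v)) (at t0)"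
proof -
  have "((\<lambda>t. exp (ln (F t))) has_derivative (\<lambda>v. exp (ln (F t0)) * D v)) (at t0)"
    by (rule derivative_eq_intros d refl | simp add: mult.commute)+
  then have "((\<lambda>t. exp (ln (F t))) has_derivative (\<lambda>v. F t0 * D v)) (at t0)"
    using pos S by simp
  then show ?thesis
    by (rule has_derivative_transform_within_open[OF _ S]) (use pos in simp)
qed

lemma outer_mult_vec: "outer a b *v w = (b \<bullet> w) *\<^sub>R (a :: real^'n)"
  by (simp add: outer_def vec_eq_iff matrix_vector_mult_def inner_vec_def sum_distrib_left mult_ac)

lemma bounded_linear_matrix_vector_mult_left: "bounded_linear (\<lambda>M :: real^'n^'m. M *v v)"
  unfolding linear_conv_bounded_linear[symmetric]
  by (rule linearI) (simp_all add: matrix_vector_mult_add_rdistrib scaleR_matrix_vector_assoc)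

lemma integral_matrix_vector_mult:
  fixes M :: "'a measure" and J :: "'a \<Rightarrow> real^'n^'m"
  assumes "integrable M J"
  shows "integrable M (\<lambda>x. J x *v v)" and "(LINT x|M. J x *v v) = (LINT x|M. J x) *v v"
  using integrable_bounded_linear[OF bounded_linear_matrix_vector_mult_left assms]
    integral_bounded_linear[OF bounded_linear_matrix_vector_mult_left assms] by simp_all

lemma matrix_inv_mult_vec_eq:
  fixes J :: "'a::field^'n^'n"
  assumes "invertible J" and "J *v v = n"
  shows "v = matrix_inv J *v n"
proof -
  have "matrix_inv J ** J = mat 1"
    using assms(1) unfolding invertible_def matrix_inv_def by (rule someI_ex[THEN conjunct2])
  then show ?thesis
    using assms(2) by (metis matrix_vector_mul_assoc matrix_vector_mul_lid)
qed

definition K_weight :: "real \<Rightarrow> real \<Rightarrow> real \<Rightarrow> real \<Rightarrow> real" where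
  "K_weight A \<alpha> a p = Kfun A (a / p - 1) * p powr (1 + \<alpha>)"

lemma K_weight_eq:
  assumes "A \<noteq> 0" "1 + \<alpha> = A + B" "0 < a" "0 < p"
  shows "K_weight A \<alpha> a p = (a powr A - p powr A) * p powr B / A"
  using assms by (simp add: K_weight_def Kfun_def powr_divide powr_add field_simps)

lemma DERIV_K_weight_data:
  assumes "A \<noteq> 0" "1 + \<alpha> = A + B" "0 < a" "0 < p"
  shows "((\<lambda>a. K_weight A \<alpha> a p) has_real_derivative p powr B * a powr (A - 1)) (at a)"
proof -
  have "((\<lambda>a. (a powr A - p powr A) * p powr B / A) has_real_derivative p powr B * a powr (A - 1)) (at a)"
    using assms by (auto intro!: derivative_eq_intros)
  then show ?thesis
    by (rule has_field_derivative_transform_within_open[where S="{0<..}"])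
      (use assms in \<open>auto simp: K_weight_eq\<close>)
qed

lemma DERIV_K_weight_model:
  assumes "A \<noteq> 0" "1 + \<alpha> = A + B" "0 < a" "0 < p"
  shows "((\<lambda>p. K_weight A \<alpha> a p) has_real_derivative
           (B * (a powr A - p powr A) * p powr B - A * p powr (1 + \<alpha>)) / (A * p)) (at p)"
proof -
  have "((\<lambda>p. (a powr A - p powr A) * p powr B / A) has_real_derivative
           (B * (a powr A - p powr A) * p powr B - A * p powr (1 + \<alpha>)) / (A * p)) (at p)"
    using assms by (auto intro!: derivative_eq_intros simp: field_simps powr_diff powr_add)
  then show ?thesis
    by (rule has_field_derivative_transform_within_open[where S="{0<..}"])
      (use assms in \<open>auto simp: K_weight_eq\<close>)
qed

lemma has_derivative_K_weight_mixture:
  fixes V :: "'b::real_normed_vector"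
  assumes "A \<noteq> 0" "1 + \<alpha> = A + B" "0 < a" "0 < p"
  shows "((\<lambda>e. K_weight A \<alpha> ((1 - e) * a + e * w) p *\<^sub>R V) has_derivative
           (\<lambda>t. t *\<^sub>R ((p powr B * a powr (A - 1) * w) *\<^sub>R V - (p powr B * a powr A) *\<^sub>R V)))
         (at 0 within S)"
proof -
  have "((\<lambda>e. (1 - e) * a + e * w) has_derivative (\<lambda>t. t * (w - a))) (at 0 within S)"
    by (auto intro!: derivative_eq_intros simp: algebra_simps)
  from DERIV_compose_FDERIV[OF _ this, of "\<lambda>a. K_weight A \<alpha> a p"]
  have "((\<lambda>e. K_weight A \<alpha> ((1 - e) * a + e * w) p) has_derivative
          (\<lambda>t. t * (w - a) * (p powr B * a powr (A - 1)))) (at 0 within S)"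
    using DERIV_K_weight_data[OF assms] by simp
  from has_derivative_scaleR_left[OF this, of V] show ?thesis
  proof (rule has_derivative_eq_rhs)
    have "a powr (A - 1) * a = a powr A"
      using assms(3) by (simp add: powr_diff)
    then show "(\<lambda>t. (t * (w - a) * (p powr B * a powr (A - 1))) *\<^sub>R V) =
          (\<lambda>t. t *\<^sub>R ((p powr B * a powr (A - 1) * w) *\<^sub>R V - (p powr B * a powr A) *\<^sub>R V))"
      by (simp add: fun_eq_iff algebra_simps flip: scaleR_diff_left)
  qed
qed

lemma has_derivative_K_weight_score:
  fixes F :: "real^'n \<Rightarrow> real" and U :: "real^'n \<Rightarrow> real^'n"
  assumes "A \<noteq> 0" "1 + \<alpha> = A + B" "0 < a" "0 < F t"
    and F: "(F has_derivative (\<lambda>w. F t * (w \<bullet> U t))) (at t)"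
    and U: "(U has_derivative (\<lambda>w. - (S *v w))) (at t)"
  shows "((\<lambda>t. K_weight A \<alpha> a (F t) *\<^sub>R U t) has_derivative
           (\<lambda>w. - (1 / A) *\<^sub>R ((A *\<^sub>R (F t powr (1 + \<alpha>) *\<^sub>R outer (U t) (U t))
              + ((a powr A - F t powr A) * F t powr B) *\<^sub>R (S - B *\<^sub>R outer (U t) (U t))) *v w)))
         (at t)"
proof -
  from DERIV_compose_FDERIV[OF DERIV_K_weight_model[OF assms(1-4)] F]
  have "((\<lambda>t. K_weight A \<alpha> a (F t)) has_derivative
          (\<lambda>w. (w \<bullet> U t) * ((B * (a powr A - F t powr A) * F t powr B - A * F t powr (1 + \<alpha>)) / A)))
        (at t)"
  proof (rule has_derivative_eq_rhs)
    show "(\<lambda>w. F t * (w \<bullet> U t) * ((B * (a powr A - F t powr A) * F t powr B - A * F t powr (1 + \<alpha>)) / (A * F t)))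
        = (\<lambda>w. (w \<bullet> U t) * ((B * (a powr A - F t powr A) * F t powr B - A * F t powr (1 + \<alpha>)) / A))"
      using assms(4) by (simp add: fun_eq_iff)
  qed
  from has_derivative_scaleR[OF this U] show ?thesis
    using assms
    by (simp add: K_weight_eq matrix_vector_mult_add_rdistrib matrix_vector_mult_diff_rdistrib
        scaleR_matrix_vector_assoc[symmetric] outer_mult_vec inner_commute[of "U t"] algebra_simps
        diff_divide_distrib add_divide_distrib)
qed

lemma est_integrand_eq_K_weight:
  "est_integrand \<alpha> lam W h f u M \<theta> x =
     K_weight (1 + lam * (1 - \<alpha>)) \<alpha> (gstar W h M x) (fstar W h f \<theta> x) *\<^sub>R u \<theta> x"
  by (simp add: est_integrand_def K_weight_def)

lemma est_integrand_contam_has_derivative: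
  fixes \<alpha> lam h x y :: real and W :: "real \<Rightarrow> real \<Rightarrow> real \<Rightarrow> real"
    and f :: "real^'p \<Rightarrow> real \<Rightarrow> real" and \<theta> :: "real^'p" and G :: "real measure"
  defines "A \<equiv> 1 + lam * (1 - \<alpha>)" and "B \<equiv> \<alpha> - lam * (1 - \<alpha>)"
  defines "fs \<equiv> fstar W h f \<theta> x" and "gs \<equiv> gstar W h G x"
  assumes "A \<noteq> 0" and "sets G = sets borel" and "(\<lambda>z. W x z h) \<in> borel_measurable borel"
    and "\<forall>z. 0 \<le> W x z h" and "integrable G (\<lambda>z. W x z h)" and "0 < gs" and "0 < fs"
  shows "((\<lambda>e. est_integrand \<alpha> lam W h f u (contam G y e) \<theta> x) has_derivative
           (\<lambda>t. t *\<^sub>R ((fs powr B * gs powr (A - 1) * W x y h) *\<^sub>R u \<theta> x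
                      - (fs powr B * gs powr A) *\<^sub>R u \<theta> x)))
         (at 0 within {0..1})"
proof (rule has_derivative_transform_within[OF _ zero_less_one])
  show "((\<lambda>e. K_weight A \<alpha> ((1 - e) * gs + e * W x y h) fs *\<^sub>R u \<theta> x) has_derivative
          (\<lambda>t. t *\<^sub>R ((fs powr B * gs powr (A - 1) * W x y h) *\<^sub>R u \<theta> x
                     - (fs powr B * gs powr A) *\<^sub>R u \<theta> x)))
        (at 0 within {0..1})"
    using assms by (intro has_derivative_K_weight_mixture) (simp_all add: A_def B_def)
  show "\<And>e. e \<in> {0..1} \<Longrightarrow> dist e 0 < 1 \<Longrightarrow>
      K_weight A \<alpha> ((1 - e) * gs + e * W x y h) fs *\<^sub>R u \<theta> x
      = est_integrand \<alpha> lam W h f u (contam G y e) \<theta> x"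
    using assms by (simp add: est_integrand_eq_K_weight gstar_contam)
qed simp

lemma est_integrand_has_derivative_param:
  fixes \<alpha> lam h x :: real and W :: "real \<Rightarrow> real \<Rightarrow> real \<Rightarrow> real"
    and f :: "real^'p \<Rightarrow> real \<Rightarrow> real" and \<theta> :: "real^'p" and M :: "real measure"
  defines "A \<equiv> 1 + lam * (1 - \<alpha>)" and "B \<equiv> \<alpha> - lam * (1 - \<alpha>)"
  defines "fs \<equiv> fstar W h f \<theta> x" and "gs \<equiv> gstar W h M x"
  assumes "A \<noteq> 0" and "open \<Theta>" and "\<theta> \<in> \<Theta>" and fstar_pos: "\<forall>t\<in>\<Theta>. 0 < fstar W h f t x"
    and "0 < gs"
    and score: "GDERIV (\<lambda>t. ln (fstar W h f t x)) \<theta> :> u \<theta> x"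
    and score_diff: "(\<lambda>t. u t x) differentiable (at \<theta>)"
  shows "((\<lambda>t. est_integrand \<alpha> lam W h f u M t x) has_derivative
           (\<lambda>w. - (1 / A) *\<^sub>R ((A *\<^sub>R (fs powr (1 + \<alpha>) *\<^sub>R outer (u \<theta> x) (u \<theta> x))
              + ((gs powr A - fs powr A) * fs powr B) *\<^sub>R
                  (sinfo u \<theta> x - B *\<^sub>R outer (u \<theta> x) (u \<theta> x))) *v w)))
         (at \<theta>)"
proof -
  have dF: "((\<lambda>t. fstar W h f t x) has_derivative (\<lambda>w. fs * (w \<bullet> u \<theta> x))) (at \<theta>)"
    using has_derivative_of_ln[OF score[unfolded gderiv_def] fstar_pos] assms by simp
  have "((\<lambda>t. u t x) has_derivative (\<lambda>w. jacobian (\<lambda>t. u t x) (at \<theta>) *v w)) (at \<theta>)"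
    using score_diff jacobian_works by blast
  moreover have "- (sinfo u \<theta> x *v w) = jacobian (\<lambda>t. u t x) (at \<theta>) *v w" for w
    by (simp add: sinfo_def matrix_vector_mult_def vec_eq_iff sum_negf)
  ultimately have dU: "((\<lambda>t. u t x) has_derivative (\<lambda>w. - (sinfo u \<theta> x *v w))) (at \<theta>)"
    by simp
  show ?thesis
    using has_derivative_K_weight_score[OF _ _ _ _ dF[unfolded fs_def] dU, of A \<alpha> B gs] assms
    by (simp add: est_integrand_eq_K_weight A_def B_def)
qed

lemma est_integrand_joint_derivative:
  fixes \<alpha> lam h x y :: real and W :: "real \<Rightarrow> real \<Rightarrow> real \<Rightarrow> real"
    and f :: "real^'p \<Rightarrow> real \<Rightarrow> real" and \<theta> :: "real^'p" and G :: "real measure"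
  defines "A \<equiv> 1 + lam * (1 - \<alpha>)" and "B \<equiv> \<alpha> - lam * (1 - \<alpha>)"
  defines "fs \<equiv> fstar W h f \<theta> x" and "gs \<equiv> gstar W h G x"
  assumes D: "((\<lambda>(\<epsilon>, \<theta>). est_integrand \<alpha> lam W h f u (contam G y \<epsilon>) \<theta> x) has_derivative D)
                (at (0, \<theta>) within {0..1} \<times> \<Theta>)"
    and "A \<noteq> 0" and G: "sets G = sets borel" and W_meas: "(\<lambda>(x, z). W x z h) \<in> borel_measurable borel"
    and "\<forall>z. 0 \<le> W x z h" and gs_pos: "0 < gs"
    and "open \<Theta>" and "\<theta> \<in> \<Theta>" and "\<forall>t\<in>\<Theta>. 0 < fstar W h f t x"
    and "GDERIV (\<lambda>t. ln (fstar W h f t x)) \<theta> :> u \<theta> x" and "(\<lambda>t. u t x) differentiable (at \<theta>)"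
  shows "D (s, w) = s *\<^sub>R ((fs powr B * gs powr (A - 1) * W x y h) *\<^sub>R u \<theta> x
                              - (fs powr B * gs powr A) *\<^sub>R u \<theta> x)
            + (- (1 / A)) *\<^sub>R ((A *\<^sub>R (fs powr (1 + \<alpha>) *\<^sub>R outer (u \<theta> x) (u \<theta> x))
              + ((gs powr A - fs powr A) * fs powr B) *\<^sub>R
                  (sinfo u \<theta> x - B *\<^sub>R outer (u \<theta> x) (u \<theta> x))) *v w)"
proof (rule has_derivative_pair_split[OF D zero_less_one _ \<open>\<theta> \<in> \<Theta>\<close> \<open>open \<Theta>\<close>])
  have "(\<lambda>z. W x z h) \<in> borel_measurable borel"
    using measurable_compose[OF borel_measurable_continuous_onI W_meas, of "\<lambda>z. (x, z)"]
    by (simp add: continuous_on_Pair)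
  moreover have "integrable G (\<lambda>z. W x z h)"
    using gs_pos not_integrable_integral_eq unfolding gs_def gstar_def by fastforce
  ultimately show "((\<lambda>e. (\<lambda>(\<epsilon>, \<theta>). est_integrand \<alpha> lam W h f u (contam G y \<epsilon>) \<theta> x) (e, \<theta>))
      has_derivative (\<lambda>t. t *\<^sub>R ((fs powr B * gs powr (A - 1) * W x y h) *\<^sub>R u \<theta> x
                              - (fs powr B * gs powr A) *\<^sub>R u \<theta> x))) (at 0 within {0..1})"
    using est_integrand_contam_has_derivative[of lam \<alpha> G W x h f \<theta> u y] assms
    by (simp add: fs_def gs_def A_def B_def)
  show "((\<lambda>t. (\<lambda>(\<epsilon>, \<theta>). est_integrand \<alpha> lam W h f u (contam G y \<epsilon>) \<theta> x) (0, t))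
      has_derivative (\<lambda>w. (- (1 / A)) *\<^sub>R ((A *\<^sub>R (fs powr (1 + \<alpha>) *\<^sub>R outer (u \<theta> x) (u \<theta> x))
              + ((gs powr A - fs powr A) * fs powr B) *\<^sub>R
                  (sinfo u \<theta> x - B *\<^sub>R outer (u \<theta> x) (u \<theta> x))) *v w))) (at \<theta>)"
    using est_integrand_has_derivative_param[of lam \<alpha> \<Theta> \<theta> W h f x G u] assms contam_0[OF G]
    by (simp add: fs_def gs_def A_def B_def)
qed simp

theorem theorem1:
  fixes \<alpha> lam h y :: real
    and W :: "real \<Rightarrow> real \<Rightarrow> real \<Rightarrow> real"
    and f :: "real^'p \<Rightarrow> real \<Rightarrow> real"
    and \<Theta> :: "(real^'p) set"
    and G :: "real measure" and g :: "real \<Rightarrow> real"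
    and T :: "real measure \<Rightarrow> real^'p"
    and u :: "real^'p \<Rightarrow> real \<Rightarrow> real^'p"
  defines "A \<equiv> 1 + lam * (1 - \<alpha>)"
      and "B \<equiv> \<alpha> - lam * (1 - \<alpha>)"
      and "\<theta>g \<equiv> T G"
  defines "fs \<equiv> fstar W h f \<theta>g"
      and "gs \<equiv> gstar W h G"
  defines "N \<equiv> A *\<^sub>R ((LINT x|lborel. (fs x powr B * gs x powr (A - 1) * W x y h) *\<^sub>R u \<theta>g x)
                      - (LINT x|lborel. (fs x powr B * gs x powr A) *\<^sub>R u \<theta>g x))"
      and "J \<equiv> A *\<^sub>R (LINT x|lborel. fs x powr (1 + \<alpha>) *\<^sub>R outer (u \<theta>g x) (u \<theta>g x))
              + (LINT x|lborel. ((gs x powr A - fs x powr A) * fs x powr B) *\<^sub>R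
                                (sinfo u \<theta>g x - B *\<^sub>R outer (u \<theta>g x) (u \<theta>g x)))"
  assumes alpha: "\<alpha> \<ge> 0"
      and bw: "h > 0"
      \<comment> \<open>parametric family of Lebesgue densities\<close>
      and fam: "\<forall>\<theta>\<in>\<Theta>. (\<forall>x. 0 \<le> f \<theta> x) \<and> has_bochner_integral lborel (f \<theta>) 1"
      and Theta_open: "open \<Theta>"
      \<comment> \<open>kernel: nonnegative, a probability density in x for every y\<close>
      and W_meas: "(\<lambda>(x, z). W x z h) \<in> borel_measurable borel"
      and W_nonneg: "\<forall>x z. 0 \<le> W x z h"
      and W_dens: "\<forall>z. has_bochner_integral lborel (\<lambda>x. W x z h) 1"
      \<comment> \<open>G is a distribution on the real line with Lebesgue density g\<close>
      and G_prob: "prob_space G"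
      and G_sets: "sets G = sets borel"
      and g_meas: "g \<in> borel_measurable borel"
      and g_nonneg: "\<forall>x. 0 \<le> g x"
      and G_dens: "G = density lborel g"
      \<comment> \<open>the best fitting parameter\<close>
      and thg_in: "\<theta>g \<in> \<Theta>"
      \<comment> \<open>positivity of the smoothed densities\<close>
      and fstar_pos: "\<forall>\<theta>\<in>\<Theta>. \<forall>x. 0 < fstar W h f \<theta> x"
      and gstar_pos: "\<forall>x. 0 < gs x"
      \<comment> \<open>u is the smoothed score, the gradient in theta of log f*_theta(x)\<close>
      and score: "\<forall>\<theta>\<in>\<Theta>. \<forall>x. GDERIV (\<lambda>t. ln (fstar W h f t x)) \<theta> :> u \<theta> x"
      and score_diff: "\<forall>\<theta>\<in>\<Theta>. \<forall>x. (\<lambda>t. u t x) differentiable (at \<theta>)"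
      \<comment> \<open>T(G_eps) lies in Theta and solves the estimating equation\<close>
      and T_est: "\<forall>\<epsilon>\<in>{0..1}. T (contam G y \<epsilon>) \<in> \<Theta> \<and>
                   est_fun \<alpha> lam W h f u (contam G y \<epsilon>) (T (contam G y \<epsilon>)) = 0"
      \<comment> \<open>the influence function exists\<close>
      and T_diff: "(\<lambda>\<epsilon>. T (contam G y \<epsilon>)) differentiable (at 0 within {0..1})"
      \<comment> \<open>differentiation under the integral sign in (eps, theta) at (0, theta^g) is permitted\<close>
      and interchange: "\<exists>Dk. (\<forall>x. ((\<lambda>(\<epsilon>, \<theta>). est_integrand \<alpha> lam W h f u (contam G y \<epsilon>) \<theta> x)
                                  has_derivative Dk x) (at (0, \<theta>g) within {0..1} \<times> \<Theta>))
                     \<and> ((\<lambda>(\<epsilon>, \<theta>). est_fun \<alpha> lam W h f u (contam G y \<epsilon>) \<theta>)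
                          has_derivative (\<lambda>v. LINT x|lborel. Dk x v)) (at (0, \<theta>g) within {0..1} \<times> \<Theta>)"
      \<comment> \<open>the integrals defining N*_g and J*_g exist\<close>
      and int1: "integrable lborel (\<lambda>x. (fs x powr B * gs x powr (A - 1) * W x y h) *\<^sub>R u \<theta>g x)"
      and int2: "integrable lborel (\<lambda>x. (fs x powr B * gs x powr A) *\<^sub>R u \<theta>g x)"
      and int3: "integrable lborel (\<lambda>x. fs x powr (1 + \<alpha>) *\<^sub>R outer (u \<theta>g x) (u \<theta>g x))"
      and int4: "integrable lborel (\<lambda>x. ((gs x powr A - fs x powr A) * fs x powr B) *\<^sub>R
                                (sinfo u \<theta>g x - B *\<^sub>R outer (u \<theta>g x) (u \<theta>g x)))"
      \<comment> \<open>J*_g is invertible\<close>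
      and J_inv: "invertible J"
  shows "influence_function T G y = matrix_inv J *v N"
proof -
  have fs_pos: "0 < fs x" and gs_pos: "0 < gs x" for x
    using fstar_pos thg_in gstar_pos by (simp_all add: fs_def)
  have A_nonzero: "A \<noteq> 0"
  proof
    assume "A = 0"
    then have "J = 0" using fs_pos gs_pos by (simp add: J_def less_le)
    with J_inv show False by (metis det_0 invertible_det_nz mat_0)
  qed
  obtain Dk where
    Dk: "\<And>x. ((\<lambda>(\<epsilon>, \<theta>). est_integrand \<alpha> lam W h f u (contam G y \<epsilon>) \<theta> x)
                  has_derivative Dk x) (at (0, \<theta>g) within {0..1} \<times> \<Theta>)"
    and DF: "((\<lambda>(\<epsilon>, \<theta>). est_fun \<alpha> lam W h f u (contam G y \<epsilon>) \<theta>)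
                has_derivative (\<lambda>v. LINT x|lborel. Dk x v)) (at (0, \<theta>g) within {0..1} \<times> \<Theta>)"
    using interchange by blast
  define n where "n x = (fs x powr B * gs x powr (A - 1) * W x y h) *\<^sub>R u \<theta>g x
                        - (fs x powr B * gs x powr A) *\<^sub>R u \<theta>g x" for x
  define Jm where "Jm x = A *\<^sub>R (fs x powr (1 + \<alpha>) *\<^sub>R outer (u \<theta>g x) (u \<theta>g x))
      + ((gs x powr A - fs x powr A) * fs x powr B) *\<^sub>R (sinfo u \<theta>g x - B *\<^sub>R outer (u \<theta>g x) (u \<theta>g x))"
    for x
  have Dk_eq: "Dk x (s, w) = s *\<^sub>R n x + (- (1 / A)) *\<^sub>R (Jm x *v w)" for x s w
    using est_integrand_joint_derivative[OF Dk _ G_sets W_meas spec[OF W_nonneg] _ Theta_open thg_in]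
      A_nonzero gs_pos fstar_pos score score_diff thg_in
    by (simp add: n_def Jm_def fs_def gs_def A_def B_def)
  define IF where "IF = influence_function T G y"
  have "((\<lambda>\<epsilon>. T (contam G y \<epsilon>)) has_vector_derivative IF) (at 0 within {0..1})"
    using T_diff vector_derivative_works unfolding IF_def influence_function_def by blast
  then have "(LINT x|lborel. Dk x (1, IF)) = 0"
    using has_derivative_implicit_zero[where \<Psi> = "\<lambda>(\<epsilon>, \<theta>). est_fun \<alpha> lam W h f u (contam G y \<epsilon>) \<theta>"
        and T = "\<lambda>\<epsilon>. T (contam G y \<epsilon>)" and a = 0 and b = 1 and x = 0] DF T_est
    by (auto simp: contam_0[OF G_sets] \<theta>g_def)
  moreover have "integrable lborel n" and "A *\<^sub>R (LINT x|lborel. n x) = N"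
    using int1 int2 by (simp_all add: n_def[abs_def] N_def)
  moreover have "integrable lborel Jm" and "(LINT x|lborel. Jm x) = J"
    using integrable_scaleR_right[OF int3, of A] int4
    by (simp_all add: Jm_def[abs_def] J_def Bochner_Integration.integral_add del: scaleR_scaleR)
  ultimately have "J *v IF = N"
    using A_nonzero integral_matrix_vector_mult[of lborel Jm IF] by (simp add: Dk_eq)
  then show ?thesis
    unfolding IF_def by (rule matrix_inv_mult_vec_eq[OF J_inv])
qed

end
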